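(* Let $\mathcal B$ be a connected building set on $[n+1]$ whose nested set complex $K_{\mathcal B}$ is a flag complex, and let $I\subseteq[n+1]$ have even cardinality. If the restricted building set $\mathcal B|_I$ has a connected component of odd cardinality, then $K^{\mathrm{odd}}_{\mathcal B|_I}$ is contractible (indeed a cone).
   Context: A building set on a finite set $S\subset\mathbb N$ is a collection $\mathcal B$ of nonempty subsets of $S$ containing every singleton, such that $I,J\in\mathcal B$, $I\cap J\neq\emptyset$ imply $I\cup J\in\mathcal B$; its connected components are its inclusion-maximal elements; it is connected if $S\in\mathcal B$; $\mathcal B|_I=\{J\in\mathcal B:J\subseteq I\}$. For a connected building set $\mathcal B$ on $[n+1]$, the nested set complex $K_{\mathcal B}$ is the simplicial complex on vertex set $\mathcal B\setminus\{[n+1]\}$ whose simplices are the subsets $N\subseteq\mathcal B\setminus\{[n+1]\}$ such that (i) any $I,J\in N$ satisfy $I\subseteq J$, $J\subseteq I$ or $I\cap J=\emptyset$, and (ii) for any $r\ge2$ pairwise disjoint $I_1,\dots,I_r\in N$, $I_1\cup\dots\cup I_r\notin\mathcal B$. A simplicial complex is flag if every set of vertices that are pairwise joined by edges forms a simplex. For $I\subseteq[n+1]$ of even cardinality, $K^{\mathrm{odd}}_{\mathcal B|_I}$ is the full subcomplex of $K_{\mathcal B}$ induced on the vertices $J\in\mathcal B$ with $J\subseteq I$ and $|J|$ odd. *)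

theory Defs
  imports Main
begin

definition building_set :: "nat set \<Rightarrow> nat set set \<Rightarrow> bool" where
  "building_set S B \<longleftrightarrow> finite S \<and> (\<forall>J\<in>B. J \<noteq> {} \<and> J \<subseteq> S) \<and> (\<forall>i\<in>S. {i} \<in> B) \<and>
     (\<forall>I\<in>B. \<forall>J\<in>B. I \<inter> J \<noteq> {} \<longrightarrow> I \<union> J \<in> B)"

definition components :: "nat set set \<Rightarrow> nat set set" where
  "components B = {C \<in> B. \<forall>J\<in>B. C \<subseteq> J \<longrightarrow> J = C}"

definition connected_bset :: "nat set \<Rightarrow> nat set set \<Rightarrow> bool" where
  "connected_bset S B \<longleftrightarrow> S \<in> B"

definition restrict_bset :: "nat set set \<Rightarrow> nat set \<Rightarrow> nat set set" where
  "restrict_bset B I = {J \<in> B. J \<subseteq> I}"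

definition nested_vertices :: "nat set \<Rightarrow> nat set set \<Rightarrow> nat set set" where
  "nested_vertices S B = B - {S}"

definition nested_complex :: "nat set \<Rightarrow> nat set set \<Rightarrow> nat set set set" where
  "nested_complex S B = {N. N \<subseteq> nested_vertices S B \<and>
     (\<forall>I\<in>N. \<forall>J\<in>N. I \<subseteq> J \<or> J \<subseteq> I \<or> I \<inter> J = {}) \<and>
     (\<forall>M\<subseteq>N. 2 \<le> card M \<and> (\<forall>I\<in>M. \<forall>J\<in>M. I \<noteq> J \<longrightarrow> I \<inter> J = {}) \<longrightarrow> \<Union>M \<notin> B)}"

definition flag_complex :: "'v set \<Rightarrow> 'v set set \<Rightarrow> bool" where
  "flag_complex V K \<longleftrightarrow> (\<forall>N\<subseteq>V. (\<forall>x\<in>N. \<forall>y\<in>N. x \<noteq> y \<longrightarrow> {x, y} \<in> K) \<longrightarrow> N \<in> K)"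

definition full_subcomplex :: "'v set set \<Rightarrow> 'v set \<Rightarrow> 'v set set" where
  "full_subcomplex K W = {\<sigma> \<in> K. \<sigma> \<subseteq> W}"

definition odd_complex :: "nat set \<Rightarrow> nat set set \<Rightarrow> nat set \<Rightarrow> nat set set set" where
  "odd_complex S B I = full_subcomplex (nested_complex S B)
      {J \<in> nested_vertices S B. J \<subseteq> I \<and> odd (card J)}"

definition is_cone :: "'v set set \<Rightarrow> bool" where
  "is_cone K \<longleftrightarrow> (\<exists>v. {v} \<in> K \<and> (\<forall>\<sigma>\<in>K. insert v \<sigma> \<in> K))"

end

theory Submission
  imports Defs
begin

text \<open>
  Let \<open>C\<close> be a component of \<open>\<B>|\<^sub>I\<close> of odd cardinality. Since \<open>|I|\<close> is even, \<open>C \<noteq> I\<close>, so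
  \<open>C\<close> is a proper element of \<open>\<B>\<close> and a vertex of \<open>K\<^sup>o\<^sup>d\<^sup>d\<^sub>\<B>\<^sub>|\<^sub>I\<close>. Every other vertex \<open>J \<subseteq> I\<close> is,
  by maximality of \<open>C\<close>, either contained in \<open>C\<close> or disjoint from it with \<open>C \<union> J \<notin> \<B>\<close>; hence
  \<open>{C, J}\<close> is a nested set. In a flag complex a vertex joined by an edge to every other
  vertex of a full subcomplex is a cone point of it.
\<close>

lemma is_cone_full_subcomplex_if_flag:
  assumes flag: "flag_complex V K"
    and down: "\<And>\<sigma> \<tau>. \<sigma> \<in> K \<Longrightarrow> \<tau> \<subseteq> \<sigma> \<Longrightarrow> \<tau> \<in> K"
    and "W \<subseteq> V" "v \<in> W"
    and edge: "\<And>w. w \<in> W \<Longrightarrow> w \<noteq> v \<Longrightarrow> {v, w} \<in> K"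
  shows "is_cone (full_subcomplex K W)"
  unfolding is_cone_def
proof (intro exI conjI ballI)
  have "insert v \<sigma> \<in> K" if "\<sigma> \<in> K" "\<sigma> \<subseteq> W" for \<sigma>
  proof -
    have "{x, y} \<in> K" if xy: "x \<in> insert v \<sigma>" "y \<in> insert v \<sigma>" "x \<noteq> y" for x y
    proof -
      consider "x = v" | "y = v" | "x \<in> \<sigma>" "y \<in> \<sigma>" using xy by blast
      then show ?thesis
      proof cases
        case 1
        then show ?thesis using edge[of y] xy \<open>\<sigma> \<subseteq> W\<close> by auto
      next
        case 2
        then show ?thesis using edge[of x] xy \<open>\<sigma> \<subseteq> W\<close> by (auto simp: insert_commute)
      next
        case 3
        then show ?thesis using down[OF \<open>\<sigma> \<in> K\<close>] by simp
      qed
    qed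
    moreover have "insert v \<sigma> \<subseteq> V" using \<open>W \<subseteq> V\<close> \<open>v \<in> W\<close> \<open>\<sigma> \<subseteq> W\<close> by blast
    ultimately show ?thesis using flag[unfolded flag_complex_def, rule_format, of "insert v \<sigma>"] by blast
  qed
  then show "insert v \<sigma> \<in> full_subcomplex K W" if "\<sigma> \<in> full_subcomplex K W" for \<sigma>
    using that \<open>v \<in> W\<close> unfolding full_subcomplex_def by blast
  have "{v} \<in> K" using flag[unfolded flag_complex_def, rule_format, of "{v}"] \<open>W \<subseteq> V\<close> \<open>v \<in> W\<close> by blast
  then show "{v} \<in> full_subcomplex K W" using \<open>v \<in> W\<close> unfolding full_subcomplex_def by blast
qed

lemma nested_complex_subset_closed:
  assumes "N \<in> nested_complex S B" "N' \<subseteq> N"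
  shows "N' \<in> nested_complex S B"
  using assms unfolding nested_complex_def
  by (intro CollectI conjI; elim CollectE conjE) (blast, blast, meson order_trans)

lemma pair_in_nested_complex:
  assumes "{} \<notin> B" "I \<in> nested_vertices S B" "J \<in> nested_vertices S B"
    and "I \<subseteq> J \<or> J \<subseteq> I \<or> I \<inter> J = {} \<and> I \<union> J \<notin> B"
  shows "{I, J} \<in> nested_complex S B"
  unfolding nested_complex_def
proof (intro CollectI conjI ballI allI impI)
  show "{I, J} \<subseteq> nested_vertices S B" using assms(2,3) by simp
  show "X \<subseteq> Y \<or> Y \<subseteq> X \<or> X \<inter> Y = {}" if "X \<in> {I, J}" "Y \<in> {I, J}" for X Y
    using that assms(4) by blast
  fix M assume M: "M \<subseteq> {I, J}" "2 \<le> card M \<and> (\<forall>X\<in>M. \<forall>Y\<in>M. X \<noteq> Y \<longrightarrow> X \<inter> Y = {})"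
  have "card {I, J} \<le> card M" using M(2) by (simp add: card_insert_if)
  then have "M = {I, J}" using M(1) by (simp add: card_seteq)
  then have "I \<noteq> J" using M(2) by auto
  then have "I \<inter> J = {}" using M(2) \<open>M = {I, J}\<close> by simp
  moreover have "I \<noteq> {}" "J \<noteq> {}" using assms(1-3) unfolding nested_vertices_def by auto
  ultimately have "I \<union> J \<notin> B" using assms(4) by auto
  then show "\<Union>M \<notin> B" using \<open>M = {I, J}\<close> by simp
qed

lemma component_nested_or_unmergeable:
  assumes "building_set S B" "C \<in> components (restrict_bset B I)"
    and "J \<in> B" "J \<subseteq> I" "J \<noteq> C"
  shows "J \<subseteq> C \<or> C \<inter> J = {} \<and> C \<union> J \<notin> B"
proof -
  have C: "C \<in> B" "C \<subseteq> I" and maximal: "\<And>J. J \<in> B \<Longrightarrow> J \<subseteq> I \<Longrightarrow> C \<subseteq> J \<Longrightarrow> J = C"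
    using assms(2) unfolding components_def restrict_bset_def by auto
  show ?thesis
  proof (cases "C \<inter> J = {}")
    case True
    have "J \<noteq> {}" using assms(1,3) unfolding building_set_def by blast
    then have "C \<union> J \<noteq> C" using True by blast
    then show ?thesis using maximal[of "C \<union> J"] C(2) assms(4) True by blast
  next
    case False
    then have "C \<union> J \<in> B" using assms(1,3) C(1) unfolding building_set_def by blast
    then have "C \<union> J = C" using maximal[of "C \<union> J"] C(2) assms(4) by blast
    then show ?thesis by blast
  qed
qed

theorem lemma5p3:
  fixes n :: nat and B :: "nat set set" and I :: "nat set"
  assumes "building_set {1..n+1} B"
    and "connected_bset {1..n+1} B"
    and "flag_complex (nested_vertices {1..n+1} B) (nested_complex {1..n+1} B)"
    and "I \<subseteq> {1..n+1}"
    and "even (card I)"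
    and "\<exists>C\<in>components (restrict_bset B I). odd (card C)"
  shows "is_cone (odd_complex {1..n+1} B I)"
proof -
  let ?S = "{1..n+1::nat}"
  let ?W = "{J \<in> nested_vertices ?S B. J \<subseteq> I \<and> odd (card J)}"
  obtain C where C: "C \<in> components (restrict_bset B I)" "odd (card C)"
    using assms(6) by blast
  have "C \<in> B" "C \<subseteq> I" using C(1) unfolding components_def restrict_bset_def by auto
  moreover have "C \<noteq> ?S" using C(2) \<open>C \<subseteq> I\<close> assms(4,5) by auto
  ultimately have "C \<in> ?W" using C(2) unfolding nested_vertices_def by simp
  have "{} \<notin> B" using assms(1) unfolding building_set_def by blast
  have "{C, J} \<in> nested_complex ?S B" if J: "J \<in> ?W" "J \<noteq> C" for J
  proof -
    have "J \<in> B" "J \<subseteq> I" using J(1) unfolding nested_vertices_def by auto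
    then have "J \<subseteq> C \<or> C \<inter> J = {} \<and> C \<union> J \<notin> B"
      using component_nested_or_unmergeable[OF assms(1) C(1)] J(2) by blast
    then show ?thesis
      using pair_in_nested_complex[OF \<open>{} \<notin> B\<close>, of C ?S J] \<open>C \<in> ?W\<close> J(1) by blast
  qed
  then show ?thesis unfolding odd_complex_def
    using \<open>C \<in> ?W\<close> nested_complex_subset_closed
    by (intro is_cone_full_subcomplex_if_flag[OF assms(3)]) auto
qed

end
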